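(* Let $N$ be a non-negative integer and let $c_0,c_1,c_2,c_3,c_4$ be parameters satisfying $c_0+c_1+c_2+c_3+c_4=-2N-3$. For non-negative integers $i,j,k,\ell$ with $i+j\le N$ and $k+\ell\le N$, the Tratnik polynomials of Racah type satisfy \[ \sum_{\substack{x,y\in\mathbb{Z}_{\ge 0}\\ x+y\le N}} \Lambda(x;c_1,c_2;N)\,\Omega(y;c_4,c_0,c_3;N-x)\,T_{i,j}(x,y)\,T_{k,\ell}(x,y)=\delta_{i,k}\,\delta_{j,\ell}\,\Lambda(j;c_4,c_0;N)\,\Omega(i;c_1,c_2,c_3;N-j). \]
   Context: Notation: $(a)_n=a(a+1)\cdots(a+n-1)$, $(a)_0=1$; $c_{ij}=c_i+c_j$, $c_{ijk}=c_i+c_j+c_k$. Parameters are assumed generic, so that no denominator below vanishes. For a non-negative integer $N$ and integers $0\le n,x\le N$ define \[ \Omega(n;c_1,c_2,c_3;N)=\binom{N}{n}(2n+c_{23}+1)\frac{(c_2+1)_n(N+2+c_{123})_n(c_1+1)_{N-n}}{(c_3+1)_n(c_{23}+n+1)_{N+1}}, \] \[ p_n(x;c_1,c_2,c_3;N)=\Omega(n;c_1,c_2,c_3;N)\,{}_4F_3\!\left(\begin{matrix}-n,\ n+c_{23}+1,\ -x,\ x+c_{12}+1\\ c_2+1,\ N+2+c_{123},\ -N\end{matrix};1\right), \] (the ${}_4F_3$ series being the terminating sum over $0\le s\le\min(n,x)$), and \[ \Lambda(x;c_1,c_2;N)=(-1)^x\binom{N}{x}(2x+c_{12}+1)\frac{(c_2+1)_x}{(c_1+1)_x(x+c_{12}+1)_{N+1}}.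 \] With $c_0+c_1+c_2+c_3+c_4=-2N-3$, the Tratnik polynomials of Racah type are, for non-negative integers $i,j,x,y$ with $i+j\le N$, $x+y\le N$, \[ T_{i,j}(x,y)=T_{i,j}(x,y;c_1,c_2,c_3,c_4;N)=p_i(x;c_1,c_2,c_3;N-j)\,p_j(y;c_3,c_0,c_4;N-x). \] *)

theory Defs
  imports Complex_Main
begin

definition Omega :: "nat \<Rightarrow> complex \<Rightarrow> complex \<Rightarrow> complex \<Rightarrow> nat \<Rightarrow> complex" where
  "Omega n c1 c2 c3 N =
     of_nat (N choose n) * (2 * of_nat n + c2 + c3 + 1)
     * pochhammer (c2 + 1) n * pochhammer (of_nat N + 2 + c1 + c2 + c3) n
     * pochhammer (c1 + 1) (N - n)
     / (pochhammer (c3 + 1) n * pochhammer (c2 + c3 + of_nat n + 1) (N + 1))"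

definition F43 :: "nat \<Rightarrow> nat \<Rightarrow> complex \<Rightarrow> complex \<Rightarrow> complex \<Rightarrow> nat \<Rightarrow> complex" where
  "F43 n x c1 c2 c3 N =
     (\<Sum>s\<le>min n x.
        pochhammer (- of_nat n) s * pochhammer (of_nat n + c2 + c3 + 1) s
        * pochhammer (- of_nat x) s * pochhammer (of_nat x + c1 + c2 + 1) s
        / (pochhammer (c2 + 1) s * pochhammer (of_nat N + 2 + c1 + c2 + c3) s
           * pochhammer (- of_nat N) s * of_nat (fact s)))"

definition racah_p :: "nat \<Rightarrow> nat \<Rightarrow> complex \<Rightarrow> complex \<Rightarrow> complex \<Rightarrow> nat \<Rightarrow> complex" where
  "racah_p n x c1 c2 c3 N = Omega n c1 c2 c3 N * F43 n x c1 c2 c3 N"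

definition Lambda :: "nat \<Rightarrow> complex \<Rightarrow> complex \<Rightarrow> nat \<Rightarrow> complex" where
  "Lambda x c1 c2 N =
     (-1) ^ x * of_nat (N choose x) * (2 * of_nat x + c1 + c2 + 1)
     * pochhammer (c2 + 1) x
     / (pochhammer (c1 + 1) x * pochhammer (of_nat x + c1 + c2 + 1) (N + 1))"

text \<open>Tratnik polynomial T_{i,j}(x,y; c1,c2,c3,c4; N), with c0 = -2N-3-c1-c2-c3-c4 passed explicitly\<close>
definition tratnik :: "nat \<Rightarrow> nat \<Rightarrow> nat \<Rightarrow> nat \<Rightarrow> complex \<Rightarrow> complex \<Rightarrow> complex \<Rightarrow> complex \<Rightarrow> complex \<Rightarrow> nat \<Rightarrow> complex" where
  "tratnik i j x y c0 c1 c2 c3 c4 N =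
     racah_p i x c1 c2 c3 (N - j) * racah_p j y c3 c0 c4 (N - x)"

end

theory Submission
  imports Defs
begin

text \<open>
  The univariate factor F43 n x of p_n is, as a function of x, an eigenfunction with eigenvalue
  n (n + c2 + c3 + 1) of a second-order difference operator which is symmetric for the weight
  racah_weight (the coefficients satisfy a detailed balance condition and vanish at the ends of
  0..N); hence the F43 n are orthogonal.  Since F43 n x is symmetric in n and x up to c1 and c3
  being exchanged, and Omega is essentially the weight with exchanged parameters, they are also
  orthogonal in the dual variable.  The two orthogonality relations of this square array fix all
  norms in terms of the total mass of the weight, which is found by induction on N from the
  orthogonality of F43 1 and F43 0.

  In the Tratnik sum, the inner sum over y is a dual orthogonality relation (parameters c4, c0, c3)
  which forces j = l; by the constraint on c0 + ... + c4, the remaining factor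
  Lambda(x) Omega(j; c3, c0, c4; N - x) is a constant multiple of the univariate weight on
  0..N - j, so the sum over x is univariate orthonormality.
\<close>

definition racah_generic :: "complex \<Rightarrow> complex \<Rightarrow> complex \<Rightarrow> bool" where
  "racah_generic a b c \<longleftrightarrow>
     a \<notin> \<int> \<and> b \<notin> \<int> \<and> c \<notin> \<int> \<and> a + b \<notin> \<int> \<and> b + c \<notin> \<int> \<and> a + b + c \<notin> \<int>"

lemma nonzero_if_int_shift_of_non_int:
  fixes c w :: complex
  assumes "c \<notin> \<int>" and "w - c \<in> \<int> \<or> w + c \<in> \<int>"
  shows "w \<noteq> 0"
  using assms by (auto simp: minus_in_Ints_iff)

lemma pochhammer_nonzero_if_int_shift_of_non_int:
  fixes c w :: complex
  assumes "c \<notin> \<int>" and "w - c \<in> \<int> \<or> w + c \<in> \<int>"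
  shows "pochhammer w n \<noteq> 0"
proof -
  have "w + of_nat k \<noteq> 0" for k
  proof (rule nonzero_if_int_shift_of_non_int[OF assms(1)])
    show "w + of_nat k - c \<in> \<int> \<or> w + of_nat k + c \<in> \<int>"
      using assms(2) by (metis Ints_add Ints_of_nat add.commute add_diff_eq add.left_commute)
  qed
  then show ?thesis
    by (auto simp: pochhammer_eq_0_iff eq_neg_iff_add_eq_0)
qed

lemma racah_generic_shift:
  assumes "racah_generic c1 c2 c3"
  shows "racah_generic (c1 + 1) (c2 + 1) c3"
proof -
  have shift: "z + of_nat k \<notin> \<int>" if "z \<notin> \<int>" for z :: complex and k
    using that by (metis Ints_diff Ints_of_nat add_diff_cancel_right')
  show ?thesis
    using assms shift[of c1 1] shift[of c2 1] shift[of "c1 + c2" 2] shift[of "c2 + c3" 1]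
      shift[of "c1 + c2 + c3" 2]
    by (simp add: racah_generic_def algebra_simps)
qed

lemma pochhammer_shift_right:
  fixes a :: "'a :: field"
  assumes "a \<noteq> 0"
  shows "pochhammer (a + 1) n = pochhammer a n * (a + of_nat n) / a"
  using pochhammer_rec[of a n] pochhammer_Suc[of a n] assms by (simp add: field_simps)

lemma of_nat_choose_Suc:
  assumes "x < N"
  shows "(of_nat x + 1) * of_nat (N choose Suc x)
    = (of_nat N - of_nat x) * (of_nat (N choose x) :: 'a :: comm_ring_1)"
proof -
  have "Suc x * (N choose Suc x) = (N - x) * (N choose x)"
    using binomial_absorption[of x N] binomial_absorb_comp[of N x] by simp
  then show ?thesis
    using assms by (metis of_nat_Suc of_nat_diff of_nat_mult add.commute less_imp_le)
qed

lemma choose_mult_swap: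
  assumes "x + j \<le> N"
  shows "(N choose x) * ((N - x) choose j) = (N choose j) * ((N - j) choose x)"
proof -
  have "(N choose x) * ((N - x) choose j) = (N choose (x + j)) * ((x + j) choose x)"
    using choose_mult[of x "x + j" N] assms by simp
  also have "(x + j) choose x = (x + j) choose j"
    using binomial_symmetric[of x "x + j"] by simp
  also have "(N choose (x + j)) * ((x + j) choose j) = (N choose j) * ((N - j) choose x)"
    using choose_mult[of j "x + j" N] assms by simp
  finally show ?thesis .
qed

section \<open>Second-order difference operators\<close>

definition diff_op ::
    "(complex \<Rightarrow> complex) \<Rightarrow> (complex \<Rightarrow> complex) \<Rightarrow> (complex \<Rightarrow> complex) \<Rightarrow> complex \<Rightarrow> complex"
  where
  "diff_op b d u z = b z * (u (z + 1) - u z) + d z * (u (z - 1) - u z)"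

lemma diff_op_sum:
  "diff_op b d (\<lambda>w. \<Sum>s\<in>A. c s * f s w) z = (\<Sum>s\<in>A. c s * diff_op b d (f s) z)"
  unfolding diff_op_def
  by (simp add: sum_subtractf[symmetric] sum_distrib_left sum.distrib[symmetric] algebra_simps)

lemma sum_diff_op_by_parts:
  fixes w :: "nat \<Rightarrow> complex" and b d u v :: "complex \<Rightarrow> complex"
  assumes balance: "\<And>x. x < N \<Longrightarrow> w x * b (of_nat x) = w (Suc x) * d (of_nat (Suc x))"
    and "b (of_nat N) = 0" and "d 0 = 0"
  shows "(\<Sum>x\<le>N. w x * diff_op b d u (of_nat x) * v (of_nat x))
    = - (\<Sum>x<N. w (Suc x) * d (of_nat (Suc x))
           * (u (of_nat x + 1) - u (of_nat x)) * (v (of_nat x + 1) - v (of_nat x)))"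
proof -
  have forward: "(\<Sum>x\<le>N. w x * b (of_nat x) * (u (of_nat x + 1) - u (of_nat x)) * v (of_nat x))
      = (\<Sum>x<N. w (Suc x) * d (of_nat (Suc x)) * (u (of_nat x + 1) - u (of_nat x)) * v (of_nat x))"
    using assms(2) balance by (simp flip: lessThan_Suc_atMost)
  have backward: "(\<Sum>x\<le>N. w x * d (of_nat x) * (u (of_nat x - 1) - u (of_nat x)) * v (of_nat x))
      = (\<Sum>x<N. w (Suc x) * d (of_nat (Suc x)) * (u (of_nat x) - u (of_nat x + 1)) * v (of_nat x + 1))"
    using assms(3) by (simp add: sum.atMost_shift add.commute)
  have "(\<Sum>x\<le>N. w x * diff_op b d u (of_nat x) * v (of_nat x))
      = (\<Sum>x\<le>N. w x * b (of_nat x) * (u (of_nat x + 1) - u (of_nat x)) * v (of_nat x))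
      + (\<Sum>x\<le>N. w x * d (of_nat x) * (u (of_nat x - 1) - u (of_nat x)) * v (of_nat x))"
    by (simp add: diff_op_def sum.distrib[symmetric] algebra_simps)
  then show ?thesis
    unfolding forward backward by (simp add: sum.distrib[symmetric] sum_negf[symmetric] algebra_simps)
qed

lemma diff_op_eigenfunctions_orthogonal:
  fixes w :: "nat \<Rightarrow> complex" and b d u v :: "complex \<Rightarrow> complex"
  assumes "\<And>x. x < N \<Longrightarrow> w x * b (of_nat x) = w (Suc x) * d (of_nat (Suc x))"
    and "b (of_nat N) = 0" and "d 0 = 0"
    and "\<And>x. x \<le> N \<Longrightarrow> diff_op b d u (of_nat x) = \<alpha> * u (of_nat x)"
    and "\<And>x. x \<le> N \<Longrightarrow> diff_op b d v (of_nat x) = \<beta> * v (of_nat x)"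
    and "\<alpha> \<noteq> \<beta>"
  shows "(\<Sum>x\<le>N. w x * u (of_nat x) * v (of_nat x)) = 0"
proof -
  have "\<alpha> * (\<Sum>x\<le>N. w x * u (of_nat x) * v (of_nat x))
      = (\<Sum>x\<le>N. w x * diff_op b d u (of_nat x) * v (of_nat x))"
    by (simp add: assms(4) sum_distrib_left algebra_simps)
  also have "\<dots> = - (\<Sum>x<N. w (Suc x) * d (of_nat (Suc x))
           * (u (of_nat x + 1) - u (of_nat x)) * (v (of_nat x + 1) - v (of_nat x)))"
    by (rule sum_diff_op_by_parts[OF assms(1-3)])
  also have "\<dots> = (\<Sum>x\<le>N. w x * diff_op b d v (of_nat x) * u (of_nat x))"
    using sum_diff_op_by_parts[OF assms(1-3), of v u] by (simp add: mult_ac)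
  also have "\<dots> = \<beta> * (\<Sum>x\<le>N. w x * u (of_nat x) * v (of_nat x))"
    by (simp add: assms(5) sum_distrib_left algebra_simps)
  finally show ?thesis
    using assms(6) by simp
qed


section \<open>Racah polynomials as eigenfunctions\<close>

definition racah_basis :: "nat \<Rightarrow> complex \<Rightarrow> complex \<Rightarrow> complex \<Rightarrow> complex" where
  "racah_basis s z c1 c2 = pochhammer (- z) s * pochhammer (z + c1 + c2 + 1) s"

definition racah_coeff :: "nat \<Rightarrow> nat \<Rightarrow> complex \<Rightarrow> complex \<Rightarrow> complex \<Rightarrow> nat \<Rightarrow> complex" where
  "racah_coeff n s c1 c2 c3 N =
     pochhammer (- of_nat n) s * pochhammer (of_nat n + c2 + c3 + 1) s
     / (pochhammer (c2 + 1) s * pochhammer (of_nat N + 2 + c1 + c2 + c3) s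
        * pochhammer (- of_nat N) s * of_nat (fact s))"

definition racah_poly :: "nat \<Rightarrow> complex \<Rightarrow> complex \<Rightarrow> complex \<Rightarrow> complex \<Rightarrow> nat \<Rightarrow> complex" where
  "racah_poly n z c1 c2 c3 N = (\<Sum>s\<le>n. racah_coeff n s c1 c2 c3 N * racah_basis s z c1 c2)"

definition racah_B :: "complex \<Rightarrow> complex \<Rightarrow> complex \<Rightarrow> nat \<Rightarrow> complex \<Rightarrow> complex" where
  "racah_B c1 c2 c3 N z =
     (z + c2 + 1) * (z + of_nat N + 2 + c1 + c2 + c3) * (z - of_nat N) * (z + c1 + c2 + 1)
     / ((2 * z + c1 + c2 + 1) * (2 * z + c1 + c2 + 2))"

definition racah_D :: "complex \<Rightarrow> complex \<Rightarrow> complex \<Rightarrow> nat \<Rightarrow> complex \<Rightarrow> complex" where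
  "racah_D c1 c2 c3 N z =
     z * (z + c1) * (z - c3 - of_nat N - 1) * (z + c1 + c2 + of_nat N + 1)
     / ((2 * z + c1 + c2) * (2 * z + c1 + c2 + 1))"

lemma F43_eq_racah_poly: "F43 n x c1 c2 c3 N = racah_poly n (of_nat x) c1 c2 c3 N"
proof -
  have "F43 n x c1 c2 c3 N = (\<Sum>s\<le>min n x. racah_coeff n s c1 c2 c3 N * racah_basis s (of_nat x) c1 c2)"
    unfolding F43_def racah_coeff_def racah_basis_def by (rule sum.cong) (simp_all add: algebra_simps)
  also have "\<dots> = racah_poly n (of_nat x) c1 c2 c3 N"
    unfolding racah_poly_def
    by (rule sum.mono_neutral_left) (auto simp: racah_basis_def pochhammer_of_nat_eq_0_iff)
  finally show ?thesis .
qed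

lemma F43_swap: "F43 n x c1 c2 c3 N = F43 x n c3 c2 c1 N"
  unfolding F43_def min.commute[of n x] by (rule sum.cong) (simp_all add: ac_simps)

lemma F43_0_left [simp]: "F43 0 x c1 c2 c3 N = 1"
  by (simp add: F43_def)

lemma F43_0_right [simp]: "F43 n 0 c1 c2 c3 N = 1"
  by (simp add: F43_def)

lemma racah_poly_0 [simp]: "racah_poly 0 z c1 c2 c3 N = 1"
  by (simp add: racah_poly_def racah_coeff_def racah_basis_def)

lemma racah_poly_1: "racah_poly 1 z c1 c2 c3 N = 1 + racah_coeff 1 1 c1 c2 c3 N * racah_basis 1 z c1 c2"
  by (simp add: racah_poly_def racah_coeff_def racah_basis_def)

lemma racah_basis_Suc:
  "racah_basis (Suc s) z c1 c2 = racah_basis s z c1 c2 * (of_nat s - z) * (z + c1 + c2 + 1 + of_nat s)"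
  by (simp add: racah_basis_def pochhammer_Suc algebra_simps)

lemma racah_basis_forward_diff:
  "(z + c1 + c2 + 1) * (racah_basis (Suc s) (z + 1) c1 c2 - racah_basis (Suc s) z c1 c2)
    = - (of_nat s + 1) * racah_basis s z c1 c2 * (z + c1 + c2 + 1 + of_nat s) * (2 * z + c1 + c2 + 2)"
proof -
  define T where "T = z + c1 + c2 + 1 + of_nat s"
  have lower: "pochhammer (- (z + 1)) (Suc s) = (- z - 1) * pochhammer (- z) s"
    by (simp add: pochhammer_rec algebra_simps)
  have upper: "(z + c1 + c2 + 1) * pochhammer (z + 1 + c1 + c2 + 1) (Suc s)
      = pochhammer (z + c1 + c2 + 1) s * T * (T + 1)"
    using pochhammer_rec[of "z + c1 + c2 + 1" "Suc s"] by (simp add: T_def pochhammer_Suc algebra_simps)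
  have "(z + c1 + c2 + 1) * racah_basis (Suc s) (z + 1) c1 c2
      = pochhammer (- (z + 1)) (Suc s) * ((z + c1 + c2 + 1) * pochhammer (z + 1 + c1 + c2 + 1) (Suc s))"
    unfolding racah_basis_def by (simp only: mult_ac)
  also have "\<dots> = racah_basis s z c1 c2 * (- z - 1) * T * (T + 1)"
    unfolding lower upper racah_basis_def by (simp only: mult_ac)
  finally show ?thesis
    unfolding right_diff_distrib racah_basis_Suc by (simp add: T_def algebra_simps)
qed

lemma racah_basis_backward_diff:
  "z * (racah_basis (Suc s) (z - 1) c1 c2 - racah_basis (Suc s) z c1 c2)
    = - (of_nat s + 1) * racah_basis s z c1 c2 * (of_nat s - z) * (2 * z + c1 + c2)"
proof -
  have upper: "pochhammer (z - 1 + c1 + c2 + 1) (Suc s) = (z + c1 + c2) * pochhammer (z + c1 + c2 + 1) s"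
    by (simp add: pochhammer_rec algebra_simps)
  have lower: "z * pochhammer (- (z - 1)) (Suc s)
      = - (pochhammer (- z) s * (of_nat s - z) * (of_nat s + 1 - z))"
    using pochhammer_rec[of "- z" "Suc s"] by (simp add: pochhammer_Suc algebra_simps)
  have "z * racah_basis (Suc s) (z - 1) c1 c2
      = (z * pochhammer (- (z - 1)) (Suc s)) * pochhammer (z - 1 + c1 + c2 + 1) (Suc s)"
    unfolding racah_basis_def by (simp only: mult_ac)
  also have "\<dots> = - racah_basis s z c1 c2 * (of_nat s - z) * (of_nat s + 1 - z) * (z + c1 + c2)"
    unfolding lower upper racah_basis_def by (simp add: algebra_simps)
  finally show ?thesis
    unfolding right_diff_distrib racah_basis_Suc by (simp add: algebra_simps)
qed

lemma racah_diff_op_basis_Suc: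
  fixes z c1 c2 c3 :: complex
  assumes "2 * z + c1 + c2 \<noteq> 0" "2 * z + c1 + c2 + 1 \<noteq> 0" "2 * z + c1 + c2 + 2 \<noteq> 0"
  shows "diff_op (racah_B c1 c2 c3 N) (racah_D c1 c2 c3 N) (\<lambda>w. racah_basis (Suc s) w c1 c2) z =
     (of_nat s + 1) * (of_nat s + c2 + c3 + 2) * racah_basis (Suc s) z c1 c2
     - (of_nat s + 1) * (of_nat s + c2 + 1) * (of_nat s + of_nat N + c1 + c2 + c3 + 2)
       * (of_nat s - of_nat N) * racah_basis s z c1 c2"
proof -
  define g T where "g = racah_basis s z c1 c2" and "T = z + c1 + c2 + 1 + of_nat s"
  define P Q where "P = (z + c2 + 1) * (z + of_nat N + 2 + c1 + c2 + c3) * (z - of_nat N)"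
    and "Q = (z + c1) * (z - c3 - of_nat N - 1) * (z + c1 + c2 + of_nat N + 1)"
  have cancel: "a / (u * v) * (k * v) = k * a / u" if "v \<noteq> 0" for a u v k :: complex
    using that by (cases "u = 0") (simp_all add: field_simps)
  have "racah_B c1 c2 c3 N z * (racah_basis (Suc s) (z + 1) c1 c2 - racah_basis (Suc s) z c1 c2)
      = P / ((2 * z + c1 + c2 + 1) * (2 * z + c1 + c2 + 2))
        * ((z + c1 + c2 + 1) * (racah_basis (Suc s) (z + 1) c1 c2 - racah_basis (Suc s) z c1 c2))"
    by (simp add: racah_B_def P_def ac_simps)
  also have "\<dots> = - (of_nat s + 1) * g * T * P / (2 * z + c1 + c2 + 1)"
    unfolding racah_basis_forward_diff g_def[symmetric] T_def[symmetric] using assms(3) by (rule cancel)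
  finally have B_part:
    "racah_B c1 c2 c3 N z * (racah_basis (Suc s) (z + 1) c1 c2 - racah_basis (Suc s) z c1 c2)
      = - (of_nat s + 1) * g * T * P / (2 * z + c1 + c2 + 1)" .
  have "racah_D c1 c2 c3 N z * (racah_basis (Suc s) (z - 1) c1 c2 - racah_basis (Suc s) z c1 c2)
      = Q / ((2 * z + c1 + c2 + 1) * (2 * z + c1 + c2))
        * (z * (racah_basis (Suc s) (z - 1) c1 c2 - racah_basis (Suc s) z c1 c2))"
    by (simp add: racah_D_def Q_def ac_simps)
  also have "\<dots> = - (of_nat s + 1) * g * (of_nat s - z) * Q / (2 * z + c1 + c2 + 1)"
    unfolding racah_basis_backward_diff g_def[symmetric] using assms(1) by (rule cancel)
  finally have D_part:
    "racah_D c1 c2 c3 N z * (racah_basis (Suc s) (z - 1) c1 c2 - racah_basis (Suc s) z c1 c2)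
      = - (of_nat s + 1) * g * (of_nat s - z) * Q / (2 * z + c1 + c2 + 1)" .
  have factor: "- (P * T + Q * (of_nat s - z)) = (2 * z + c1 + c2 + 1)
      * ((of_nat s + c2 + c3 + 2) * (of_nat s - z) * T
         - (of_nat s + c2 + 1) * (of_nat s + of_nat N + c1 + c2 + c3 + 2) * (of_nat s - of_nat N))"
    unfolding P_def Q_def T_def by algebra
  have "diff_op (racah_B c1 c2 c3 N) (racah_D c1 c2 c3 N) (\<lambda>w. racah_basis (Suc s) w c1 c2) z
      = (of_nat s + 1) * g * (- (P * T + Q * (of_nat s - z))) / (2 * z + c1 + c2 + 1)"
    unfolding diff_op_def B_part D_part add_divide_distrib[symmetric] by (simp add: algebra_simps)
  also have "\<dots> = (of_nat s + 1) * g * ((of_nat s + c2 + c3 + 2) * (of_nat s - z) * T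
         - (of_nat s + c2 + 1) * (of_nat s + of_nat N + c1 + c2 + c3 + 2) * (of_nat s - of_nat N))"
    unfolding factor using assms(2) by simp
  also have "\<dots> = (of_nat s + 1) * (of_nat s + c2 + c3 + 2) * racah_basis (Suc s) z c1 c2
     - (of_nat s + 1) * (of_nat s + c2 + 1) * (of_nat s + of_nat N + c1 + c2 + c3 + 2)
       * (of_nat s - of_nat N) * racah_basis s z c1 c2"
    unfolding racah_basis_Suc g_def T_def by (simp add: algebra_simps)
  finally show ?thesis .
qed

lemma racah_coeff_Suc:
  assumes "c2 \<notin> \<int>" "c1 + c2 + c3 \<notin> \<int>" and "s < n" "n \<le> N"
  shows "- (of_nat s + 1) * (of_nat s + c2 + 1) * (of_nat s + of_nat N + c1 + c2 + c3 + 2)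
           * (of_nat s - of_nat N) * racah_coeff n (Suc s) c1 c2 c3 N
         = (of_nat n * (of_nat n + c2 + c3 + 1) - of_nat s * (of_nat s + c2 + c3 + 1))
           * racah_coeff n s c1 c2 c3 N"
proof -
  define D where "D = (of_nat s + 1) * (of_nat s + c2 + 1) * (of_nat s + of_nat N + c1 + c2 + c3 + 2)
    * (of_nat s - of_nat N)"
  have "pochhammer (c2 + 1) s \<noteq> 0" "of_nat s + c2 + 1 \<noteq> 0"
    by (rule pochhammer_nonzero_if_int_shift_of_non_int nonzero_if_int_shift_of_non_int, fact, simp)+
  moreover have "pochhammer (of_nat N + 2 + c1 + c2 + c3) s \<noteq> 0"
      "of_nat s + of_nat N + c1 + c2 + c3 + 2 \<noteq> 0"
    by (rule pochhammer_nonzero_if_int_shift_of_non_int nonzero_if_int_shift_of_non_int, fact,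
        simp add: algebra_simps)+
  moreover have "pochhammer (- of_nat N :: complex) s \<noteq> 0" "(of_nat s :: complex) - of_nat N \<noteq> 0"
    using assms(3,4) by (simp_all add: pochhammer_of_nat_eq_0_iff)
  moreover have "(of_nat s :: complex) + 1 \<noteq> 0"
    by (metis of_nat_Suc of_nat_neq_0 add.commute)
  ultimately have "D \<noteq> 0"
    and "racah_coeff n (Suc s) c1 c2 c3 N
      = racah_coeff n s c1 c2 c3 N * ((of_nat s - of_nat n) * (of_nat n + c2 + c3 + 1 + of_nat s)) / D"
    unfolding D_def racah_coeff_def pochhammer_Suc fact_Suc of_nat_mult
    by (simp, simp add: field_simps)
  then have "- D * racah_coeff n (Suc s) c1 c2 c3 N
      = - racah_coeff n s c1 c2 c3 N * ((of_nat s - of_nat n) * (of_nat n + c2 + c3 + 1 + of_nat s))"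
    by simp
  then show ?thesis
    unfolding D_def by (simp add: algebra_simps)
qed

lemma racah_poly_eigenfunction:
  fixes z c1 c2 c3 :: complex
  assumes "c2 \<notin> \<int>" "c1 + c2 + c3 \<notin> \<int>" and "n \<le> N"
    and "2 * z + c1 + c2 \<noteq> 0" "2 * z + c1 + c2 + 1 \<noteq> 0" "2 * z + c1 + c2 + 2 \<noteq> 0"
  shows "diff_op (racah_B c1 c2 c3 N) (racah_D c1 c2 c3 N) (\<lambda>w. racah_poly n w c1 c2 c3 N) z
    = of_nat n * (of_nat n + c2 + c3 + 1) * racah_poly n z c1 c2 c3 N"
proof -
  define L where "L = diff_op (racah_B c1 c2 c3 N) (racah_D c1 c2 c3 N)"
  define A where "A s = racah_coeff n s c1 c2 c3 N" for s
  define \<phi> where "\<phi> s = racah_basis s z c1 c2" for s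
  define \<mu> where "\<mu> s = of_nat s * (of_nat s + c2 + c3 + 1 :: complex)" for s
  have "L (\<lambda>w. racah_poly n w c1 c2 c3 N) z = (\<Sum>s\<le>n. A s * L (\<lambda>w. racah_basis s w c1 c2) z)"
    unfolding L_def racah_poly_def A_def by (rule diff_op_sum)
  also have "\<dots> = (\<Sum>t<n. A (Suc t) * L (\<lambda>w. racah_basis (Suc t) w c1 c2) z)"
    by (simp add: sum.atMost_shift L_def diff_op_def racah_basis_def)
  also have "\<dots> = (\<Sum>t<n. A (Suc t) * \<mu> (Suc t) * \<phi> (Suc t) + (\<mu> n - \<mu> t) * A t * \<phi> t)"
  proof (rule sum.cong)
    fix t assume "t \<in> {..<n}"
    then have "t < n" by simp
    have "A (Suc t) * L (\<lambda>w. racah_basis (Suc t) w c1 c2) z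
        = A (Suc t) * \<mu> (Suc t) * \<phi> (Suc t) + (- (of_nat t + 1) * (of_nat t + c2 + 1)
          * (of_nat t + of_nat N + c1 + c2 + c3 + 2) * (of_nat t - of_nat N) * A (Suc t)) * \<phi> t"
      unfolding L_def racah_diff_op_basis_Suc[OF assms(4-6)] \<phi>_def \<mu>_def
      by (simp add: algebra_simps)
    also have "\<dots> = A (Suc t) * \<mu> (Suc t) * \<phi> (Suc t) + (\<mu> n - \<mu> t) * A t * \<phi> t"
      unfolding A_def \<mu>_def racah_coeff_Suc[OF assms(1,2) \<open>t < n\<close> assms(3)] ..
    finally show "A (Suc t) * L (\<lambda>w. racah_basis (Suc t) w c1 c2) z
        = A (Suc t) * \<mu> (Suc t) * \<phi> (Suc t) + (\<mu> n - \<mu> t) * A t * \<phi> t" .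
  qed simp
  also have "\<dots> = (\<Sum>s\<le>n. \<mu> s * A s * \<phi> s) + (\<Sum>s\<le>n. (\<mu> n - \<mu> s) * A s * \<phi> s)"
  proof -
    have "(\<Sum>s\<le>n. \<mu> s * A s * \<phi> s) = (\<Sum>t<n. A (Suc t) * \<mu> (Suc t) * \<phi> (Suc t))"
      by (simp add: sum.atMost_shift \<mu>_def mult_ac)
    moreover have "(\<Sum>s\<le>n. (\<mu> n - \<mu> s) * A s * \<phi> s) = (\<Sum>t<n. (\<mu> n - \<mu> t) * A t * \<phi> t)"
      by (simp flip: lessThan_Suc_atMost)
    ultimately show ?thesis
      by (simp add: sum.distrib)
  qed
  also have "\<dots> = \<mu> n * racah_poly n z c1 c2 c3 N"
    by (simp add: racah_poly_def A_def \<phi>_def sum_distrib_left flip: sum.distrib) (simp add: algebra_simps)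
  finally show ?thesis
    unfolding L_def \<mu>_def .
qed

section \<open>Orthogonality\<close>

definition racah_weight :: "nat \<Rightarrow> complex \<Rightarrow> complex \<Rightarrow> complex \<Rightarrow> nat \<Rightarrow> complex" where
  "racah_weight x c1 c2 c3 N =
     Lambda x c1 c2 N * pochhammer (of_nat N + 2 + c1 + c2 + c3) x / pochhammer (- c3 - of_nat N) x"

lemma racah_weight_balance:
  assumes "racah_generic c1 c2 c3" and "x < N"
  shows "racah_weight x c1 c2 c3 N * racah_B c1 c2 c3 N (of_nat x)
    = racah_weight (Suc x) c1 c2 c3 N * racah_D c1 c2 c3 N (of_nat (Suc x))"
proof -
  from assms(1) have c: "c1 \<notin> \<int>" "c2 \<notin> \<int>" "c3 \<notin> \<int>" "c1 + c2 \<notin> \<int>" "c1 + c2 + c3 \<notin> \<int>"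
    by (simp_all add: racah_generic_def)
  txt \<open>Every linear factor gets a name, so that the final field_simps call cancels them
    instead of multiplying them out.\<close>
  define k y e e1 e' p q r t u v where
    "k = of_nat N - (of_nat x :: complex)" and "y = of_nat x + (1 :: complex)"
    and "e = 2 * of_nat x + c1 + c2 + 1" and "e1 = 2 * of_nat x + c1 + c2 + 2"
    and "e' = 2 * of_nat x + c1 + c2 + 3" and "p = c2 + 1 + of_nat x" and "q = c1 + 1 + of_nat x"
    and "r = of_nat x + c1 + c2 + 1" and "t = of_nat x + c1 + c2 + 1 + of_nat (N + 1)"
    and "u = of_nat N + 2 + c1 + c2 + c3 + of_nat x" and "v = - c3 - of_nat N + of_nat x"
  note atoms = k_def y_def e_def e1_def e'_def p_def q_def r_def t_def u_def v_def
  define C P1 P2 P5 P6 Q where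
    "C = (of_nat (N choose x) :: complex)" and "P1 = pochhammer (c1 + 1) x"
    and "P2 = pochhammer (c2 + 1) x"
    and "P5 = pochhammer (of_nat N + 2 + c1 + c2 + c3) x" and "P6 = pochhammer (- c3 - of_nat N) x"
    and "Q = pochhammer (of_nat x + c1 + c2 + 1) (N + 1)"
  have poch_nz: "P1 \<noteq> 0" "P6 \<noteq> 0" "Q \<noteq> 0"
    unfolding P1_def P6_def Q_def
    by (rule pochhammer_nonzero_if_int_shift_of_non_int, rule c, simp add: algebra_simps)+
  have lin_nz: "e \<noteq> 0" "e1 \<noteq> 0" "e' \<noteq> 0" "q \<noteq> 0" "r \<noteq> 0" "t \<noteq> 0" "v \<noteq> 0"
    unfolding atoms by (rule nonzero_if_int_shift_of_non_int, rule c, simp add: algebra_simps)+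
  have "y \<noteq> 0"
    unfolding y_def by (metis of_nat_Suc of_nat_neq_0 add.commute)
  have choose: "of_nat (N choose Suc x) = C * k / y"
    using of_nat_choose_Suc[OF assms(2), where 'a = complex] \<open>y \<noteq> 0\<close>
    unfolding C_def k_def y_def by (simp add: field_simps)
  have Q_Suc: "pochhammer (of_nat (Suc x) + c1 + c2 + 1) (N + 1) = Q * t / r"
    using pochhammer_shift_right[OF lin_nz(5), of "N + 1"] unfolding Q_def t_def r_def
    by (simp add: algebra_simps)
  have W: "racah_weight x c1 c2 c3 N = (-1) ^ x * C * e * P2 / (P1 * Q) * P5 / P6"
    unfolding racah_weight_def Lambda_def C_def e_def P1_def P2_def P5_def P6_def Q_def ..
  have e'_Suc: "2 * of_nat (Suc x) + c1 + c2 + 1 = e'"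
    unfolding e'_def by simp
  have W_Suc: "racah_weight (Suc x) c1 c2 c3 N
      = (-1) * (-1) ^ x * (C * k / y) * e' * (P2 * p) / (P1 * q * (Q * t / r)) * (P5 * u) / (P6 * v)"
    unfolding racah_weight_def Lambda_def choose Q_Suc e'_Suc pochhammer_Suc power_Suc
    unfolding P1_def P2_def P5_def P6_def p_def q_def u_def v_def ..
  have B: "racah_B c1 c2 c3 N (of_nat x) = p * u * (- k) * r / (e * e1)"
    unfolding racah_B_def by (rule arg_cong2[where f = "(/)"]) (simp_all add: atoms algebra_simps)
  have D: "racah_D c1 c2 c3 N (of_nat (Suc x)) = y * q * v * t / (e1 * e')"
    unfolding racah_D_def by (rule arg_cong2[where f = "(/)"]) (simp_all add: atoms algebra_simps)
  show ?thesis
    unfolding W W_Suc B D using poch_nz lin_nz \<open>y \<noteq> 0\<close> by (simp add: field_simps)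
qed

lemma racah_poly_orthogonal:
  assumes "racah_generic c1 c2 c3" and "n \<le> N" "m \<le> N" "n \<noteq> m"
  shows "(\<Sum>x\<le>N. racah_weight x c1 c2 c3 N
            * racah_poly n (of_nat x) c1 c2 c3 N * racah_poly m (of_nat x) c1 c2 c3 N) = 0"
proof (rule diff_op_eigenfunctions_orthogonal)
  from assms(1) have c: "c2 \<notin> \<int>" "c1 + c2 \<notin> \<int>" "c2 + c3 \<notin> \<int>" "c1 + c2 + c3 \<notin> \<int>"
    by (simp_all add: racah_generic_def)
  have z: "2 * of_nat x + c1 + c2 \<noteq> 0" "2 * of_nat x + c1 + c2 + 1 \<noteq> 0"
    "2 * of_nat x + c1 + c2 + 2 \<noteq> 0" for x :: nat
    by (rule nonzero_if_int_shift_of_non_int[OF c(2)], simp add: algebra_simps)+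
  show "racah_weight x c1 c2 c3 N * racah_B c1 c2 c3 N (of_nat x)
      = racah_weight (Suc x) c1 c2 c3 N * racah_D c1 c2 c3 N (of_nat (Suc x))" if "x < N" for x
    using assms(1) that by (rule racah_weight_balance)
  show "racah_B c1 c2 c3 N (of_nat N) = 0" "racah_D c1 c2 c3 N 0 = 0"
    by (simp_all add: racah_B_def racah_D_def)
  show "diff_op (racah_B c1 c2 c3 N) (racah_D c1 c2 c3 N) (\<lambda>w. racah_poly n w c1 c2 c3 N) (of_nat x)
      = of_nat n * (of_nat n + c2 + c3 + 1) * racah_poly n (of_nat x) c1 c2 c3 N"
    and "diff_op (racah_B c1 c2 c3 N) (racah_D c1 c2 c3 N) (\<lambda>w. racah_poly m w c1 c2 c3 N) (of_nat x)
      = of_nat m * (of_nat m + c2 + c3 + 1) * racah_poly m (of_nat x) c1 c2 c3 N" for x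
    using racah_poly_eigenfunction[OF c(1,4) _ z] assms(2,3) by blast+
  have "of_nat n - of_nat m \<noteq> (0 :: complex)"
    using assms(4) by simp
  moreover have "of_nat n + of_nat m + c2 + c3 + 1 \<noteq> 0"
    by (rule nonzero_if_int_shift_of_non_int[OF c(3)]) (simp add: algebra_simps)
  moreover have "of_nat n * (of_nat n + c2 + c3 + 1) - of_nat m * (of_nat m + c2 + c3 + 1)
      = (of_nat n - of_nat m) * (of_nat n + of_nat m + c2 + c3 + (1 :: complex))"
    by algebra
  ultimately show
    "of_nat n * (of_nat n + c2 + c3 + 1) \<noteq> of_nat m * (of_nat m + c2 + c3 + (1 :: complex))"
    by (metis eq_iff_diff_eq_0 mult_eq_0_iff)
qed

lemma F43_orthogonal:
  assumes "racah_generic c1 c2 c3" and "n \<le> N" "m \<le> N" "n \<noteq> m"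
  shows "(\<Sum>x\<le>N. racah_weight x c1 c2 c3 N * F43 n x c1 c2 c3 N * F43 m x c1 c2 c3 N) = 0"
  unfolding F43_eq_racah_poly using assms by (rule racah_poly_orthogonal)

section \<open>Norms\<close>

lemma biorthogonal_norms:
  fixes F :: "nat \<Rightarrow> nat \<Rightarrow> 'a :: comm_ring_1" and V W :: "nat \<Rightarrow> 'a"
  assumes F_0: "\<And>x. F 0 x = 1" "\<And>n. F n 0 = 1"
    and orth: "\<And>n m. n \<le> N \<Longrightarrow> m \<le> N \<Longrightarrow> n \<noteq> m \<Longrightarrow> (\<Sum>x\<le>N. W x * F n x * F m x) = 0"
    and orth_dual: "\<And>x y. x \<le> N \<Longrightarrow> y \<le> N \<Longrightarrow> x \<noteq> y \<Longrightarrow> (\<Sum>n\<le>N. V n * F n x * F n y) = 0"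
  shows "n \<le> N \<Longrightarrow> V n * (\<Sum>x\<le>N. W x * F n x * F n x) = V 0 * (\<Sum>x\<le>N. W x)"
    and "x \<le> N \<Longrightarrow> W x * (\<Sum>n\<le>N. V n * F n x * F n x) = V 0 * (\<Sum>x\<le>N. W x)"
proof -
  txt \<open>Evaluate the double sum of W x F n x V m F m x F m y in both orders.\<close>
  have key: "V n * F n y * (\<Sum>x\<le>N. W x * F n x * F n x) = W y * F n y * (\<Sum>m\<le>N. V m * F m y * F m y)"
    if "n \<le> N" "y \<le> N" for n y
  proof -
    have "(\<Sum>m\<le>N. V m * F m y * (\<Sum>x\<le>N. W x * F n x * F m x))
        = (\<Sum>x\<le>N. W x * F n x * (\<Sum>m\<le>N. V m * F m x * F m y))"
      unfolding sum_distrib_left sum_distrib_right by (subst sum.swap) (simp add: algebra_simps)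
    moreover have "(\<Sum>m\<le>N. V m * F m y * (\<Sum>x\<le>N. W x * F n x * F m x))
        = V n * F n y * (\<Sum>x\<le>N. W x * F n x * F n x)"
      using that orth by (subst sum.remove[of _ n]) (auto intro!: sum.neutral)
    moreover have "(\<Sum>x\<le>N. W x * F n x * (\<Sum>m\<le>N. V m * F m x * F m y))
        = W y * F n y * (\<Sum>m\<le>N. V m * F m y * F m y)"
      using that orth_dual by (subst sum.remove[of _ y]) (auto intro!: sum.neutral)
    ultimately show ?thesis
      by simp
  qed
  show "V n * (\<Sum>x\<le>N. W x * F n x * F n x) = V 0 * (\<Sum>x\<le>N. W x)" if "n \<le> N"
    using key[OF that, of 0] key[of 0 0] by (simp add: F_0)
  show "W x * (\<Sum>n\<le>N. V n * F n x * F n x) = V 0 * (\<Sum>x\<le>N. W x)" if "x \<le> N"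
    using key[of 0 x] key[of 0 0] that by (simp add: F_0)
qed

lemma racah_weight_shift:
  assumes "racah_generic c1 c2 c3"
  shows "racah_weight (Suc x) c1 c2 c3 (Suc N) * racah_basis 1 (of_nat (Suc x)) c1 c2
    = (of_nat N + 1) * (c2 + 1) * (of_nat N + c1 + c2 + c3 + 3) / ((c1 + 1) * (- c3 - of_nat N - 1))
      * racah_weight x (c1 + 1) (c2 + 1) c3 N"
proof -
  from assms have c: "c1 \<notin> \<int>" "c3 \<notin> \<int>" "c1 + c2 \<notin> \<int>"
    by (simp_all add: racah_generic_def)
  define C P1 P2 P5 P6 Q where
    "C = (of_nat (N choose x) :: complex)" and "P1 = pochhammer (c1 + 1 + 1) x"
    and "P2 = pochhammer (c2 + 1 + 1) x"
    and "P5 = pochhammer (of_nat N + 2 + (c1 + 1) + (c2 + 1) + c3) x"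
    and "P6 = pochhammer (- c3 - of_nat N) x"
    and "Q = pochhammer (of_nat x + (c1 + 1) + (c2 + 1) + 1) (N + 1)"
  define y r e n1 a1 a2 a5 a6 where "y = of_nat x + (1 :: complex)" and "r = of_nat x + c1 + c2 + 2"
    and "e = 2 * of_nat x + (c1 + 1) + (c2 + 1) + 1" and "n1 = of_nat N + (1 :: complex)"
    and "a1 = c1 + 1" and "a2 = c2 + 1" and "a5 = of_nat N + c1 + c2 + c3 + 3"
    and "a6 = - c3 - of_nat N - 1"
  have poch_nz: "P1 \<noteq> 0" "P6 \<noteq> 0" "Q \<noteq> 0"
    unfolding P1_def P6_def Q_def
    by (rule pochhammer_nonzero_if_int_shift_of_non_int, rule c, simp add: algebra_simps)+
  have lin_nz: "r \<noteq> 0" "a1 \<noteq> 0" "a6 \<noteq> 0"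
    unfolding r_def a1_def a6_def
    by (rule nonzero_if_int_shift_of_non_int, rule c, simp add: algebra_simps)+
  have "y \<noteq> 0"
    unfolding y_def by (metis of_nat_Suc of_nat_neq_0 add.commute)
  have "(of_nat (Suc x) :: complex) * of_nat (Suc N choose Suc x) = of_nat (Suc N) * C"
    unfolding C_def by (metis Suc_times_binomial of_nat_mult)
  then have choose: "of_nat (Suc N choose Suc x) = n1 * C / y"
    using \<open>y \<noteq> 0\<close> unfolding y_def n1_def by (simp add: field_simps)
  have e: "2 * of_nat (Suc x) + c1 + c2 + 1 = e"
    unfolding e_def by simp
  have Q: "pochhammer (of_nat (Suc x) + c1 + c2 + 1) (Suc N + 1) = r * Q"
    using pochhammer_rec[of "of_nat (Suc x) + c1 + c2 + 1" "N + 1"] unfolding Q_def r_def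
    by (simp add: algebra_simps)
  have P5: "pochhammer (of_nat (Suc N) + 2 + c1 + c2 + c3) (Suc x) = a5 * P5"
    unfolding P5_def a5_def pochhammer_rec by (simp add: algebra_simps)
  have P6: "pochhammer (- c3 - of_nat (Suc N)) (Suc x) = a6 * P6"
    unfolding P6_def a6_def pochhammer_rec by (simp add: algebra_simps)
  have basis: "racah_basis 1 (of_nat (Suc x)) c1 c2 = - y * r"
    unfolding racah_basis_def y_def r_def by (simp add: algebra_simps)
  have "racah_weight (Suc x) c1 c2 c3 (Suc N) * racah_basis 1 (of_nat (Suc x)) c1 c2
      = (-1 * (-1) ^ x) * (n1 * C / y) * e * (a2 * P2) / ((a1 * P1) * (r * Q)) * (a5 * P5) / (a6 * P6)
        * (- y * r)"
    unfolding racah_weight_def Lambda_def choose e Q P5 P6 basis power_Suc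
    unfolding P1_def P2_def a1_def a2_def pochhammer_rec ..
  also have "\<dots> = n1 * a2 * a5 / (a1 * a6) * ((-1) ^ x * C * e * P2 / (P1 * Q) * P5 / P6)"
    using poch_nz lin_nz \<open>y \<noteq> 0\<close> by (simp add: field_simps)
  also have "(-1) ^ x * C * e * P2 / (P1 * Q) * P5 / P6 = racah_weight x (c1 + 1) (c2 + 1) c3 N"
    unfolding racah_weight_def Lambda_def C_def e_def P1_def P2_def P5_def P6_def Q_def ..
  finally show ?thesis
    unfolding n1_def a1_def a2_def a5_def a6_def .
qed

lemma racah_weight_first_moment:
  assumes "racah_generic c1 c2 c3"
  shows "racah_coeff 1 1 c1 c2 c3 (Suc N)
      * (\<Sum>x\<le>Suc N. racah_weight x c1 c2 c3 (Suc N) * racah_basis 1 (of_nat x) c1 c2)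
    = - ((c2 + c3 + 2) / ((c1 + 1) * (c3 + of_nat N + 1))
        * (\<Sum>x\<le>N. racah_weight x (c1 + 1) (c2 + 1) c3 N))"
proof -
  from assms have c: "c1 \<notin> \<int>" "c2 \<notin> \<int>" "c3 \<notin> \<int>" "c1 + c2 + c3 \<notin> \<int>"
    by (simp_all add: racah_generic_def)
  define a b1 b2 u v n1 where "a = c2 + c3 + 2" and "b1 = c1 + 1" and "b2 = c2 + 1"
    and "u = of_nat N + c1 + c2 + c3 + 3" and "v = c3 + of_nat N + 1"
    and "n1 = of_nat N + (1 :: complex)"
  have nz: "b2 \<noteq> 0" "u \<noteq> 0"
    unfolding b2_def u_def by (rule nonzero_if_int_shift_of_non_int, rule c, simp add: algebra_simps)+
  have "n1 \<noteq> 0"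
    unfolding n1_def by (metis of_nat_Suc of_nat_neq_0 add.commute)
  have coeff: "racah_coeff 1 1 c1 c2 c3 (Suc N) = - a / (b2 * u * (- n1))"
    unfolding racah_coeff_def a_def b2_def u_def n1_def by (simp add: algebra_simps)
  have moment: "(\<Sum>x\<le>Suc N. racah_weight x c1 c2 c3 (Suc N) * racah_basis 1 (of_nat x) c1 c2)
      = (of_nat N + 1) * (c2 + 1) * (of_nat N + c1 + c2 + c3 + 3) / ((c1 + 1) * (- c3 - of_nat N - 1))
        * (\<Sum>x\<le>N. racah_weight x (c1 + 1) (c2 + 1) c3 N)"
    unfolding sum.atMost_Suc_shift racah_weight_shift[OF assms]
    by (simp add: racah_basis_def sum_distrib_left)
  have factor:
    "(of_nat N + 1) * (c2 + 1) * (of_nat N + c1 + c2 + c3 + 3) / ((c1 + 1) * (- c3 - of_nat N - 1))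
      = n1 * b2 * u / (b1 * (- v))"
    unfolding n1_def b1_def b2_def u_def v_def by (simp add: algebra_simps)
  show ?thesis
    unfolding coeff moment factor unfolding a_def[symmetric] b1_def[symmetric] v_def[symmetric]
    using nz \<open>n1 \<noteq> 0\<close> by (simp add: field_simps)
qed

lemma racah_weight_sum:
  assumes "racah_generic c1 c2 c3"
  shows "(\<Sum>x\<le>N. racah_weight x c1 c2 c3 N)
    = pochhammer (c2 + c3 + 2) N / (pochhammer (c1 + 1) N * pochhammer (c3 + 1) N)"
  using assms
proof (induction N arbitrary: c1 c2)
  case 0
  then have "c1 + c2 + 1 \<noteq> 0"
    by (intro nonzero_if_int_shift_of_non_int[of "c1 + c2"]) (simp_all add: racah_generic_def)
  then show ?case
    by (simp add: racah_weight_def Lambda_def)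
next
  case (Suc N)
  define W where "W x = racah_weight x c1 c2 c3 (Suc N)" for x
  have "0 = (\<Sum>x\<le>Suc N.
      W x * racah_poly 1 (of_nat x) c1 c2 c3 (Suc N) * racah_poly 0 (of_nat x) c1 c2 c3 (Suc N))"
    unfolding W_def by (rule racah_poly_orthogonal[OF Suc.prems, symmetric]) simp_all
  also have "\<dots> = (\<Sum>x\<le>Suc N. W x)
      + racah_coeff 1 1 c1 c2 c3 (Suc N) * (\<Sum>x\<le>Suc N. W x * racah_basis 1 (of_nat x) c1 c2)"
    unfolding racah_poly_1 racah_poly_0 by (simp add: sum.distrib sum_distrib_left algebra_simps)
  also have "\<dots> = (\<Sum>x\<le>Suc N. W x) - (c2 + c3 + 2) / ((c1 + 1) * (c3 + of_nat N + 1))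
      * (pochhammer (c2 + c3 + 3) N / (pochhammer (c1 + 2) N * pochhammer (c3 + 1) N))"
    unfolding W_def racah_weight_first_moment[OF Suc.prems] Suc.IH[OF racah_generic_shift[OF Suc.prems]]
    by (simp add: ac_simps)
  finally have "(\<Sum>x\<le>Suc N. W x) = (c2 + c3 + 2) / ((c1 + 1) * (c3 + of_nat N + 1))
      * (pochhammer (c2 + c3 + 3) N / (pochhammer (c1 + 2) N * pochhammer (c3 + 1) N))"
    by simp
  also have "\<dots> = pochhammer (c2 + c3 + 2) (Suc N)
      / (pochhammer (c1 + 1) (Suc N) * pochhammer (c3 + 1) (Suc N))"
    unfolding pochhammer_rec[of "c2 + c3 + 2"] pochhammer_rec[of "c1 + 1"] pochhammer_Suc[of "c3 + 1"]
    by (simp add: algebra_simps)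
  finally show ?case
    unfolding W_def .
qed

lemma Omega_eq_racah_weight:
  assumes "c1 \<notin> \<int>" and "n \<le> N"
  shows "Omega n c1 c2 c3 N = pochhammer (c1 + 1) N * racah_weight n c3 c2 c1 N"
proof -
  define A B where "A = pochhammer (c1 + 1) (N - n)" and "B = pochhammer (c1 + 1 + of_nat (N - n)) n"
  define X Y where
    "X = of_nat (N choose n) * (2 * of_nat n + c2 + c3 + 1) * pochhammer (c2 + 1) n
       * pochhammer (of_nat N + 2 + c1 + c2 + c3) n"
    and "Y = pochhammer (c3 + 1) n * pochhammer (c2 + c3 + of_nat n + 1) (N + 1)"
  have split: "pochhammer (c1 + 1) N = A * B"
    unfolding A_def B_def using pochhammer_product[of "N - n" N "c1 + 1"] assms(2) by simp
  have "pochhammer (- (c1 + of_nat N)) n = (-1) ^ n * pochhammer (c1 + of_nat N - of_nat n + 1) n"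
    by (rule pochhammer_minus)
  then have reflect: "pochhammer (- c1 - of_nat N) n = (-1) ^ n * B"
    unfolding B_def using assms(2) by (simp add: of_nat_diff algebra_simps)
  have "B \<noteq> 0"
    unfolding B_def by (rule pochhammer_nonzero_if_int_shift_of_non_int[OF assms(1)]) simp
  have "Omega n c1 c2 c3 N = X * A / Y"
    unfolding Omega_def X_def Y_def A_def ..
  moreover have "racah_weight n c3 c2 c1 N = (-1) ^ n * X / Y / ((-1) ^ n * B)"
    unfolding racah_weight_def Lambda_def reflect X_def Y_def by (simp add: ac_simps)
  ultimately show ?thesis
    unfolding split using \<open>B \<noteq> 0\<close> by (simp add: field_simps)
qed

lemma F43_dual_orthogonal:
  assumes "racah_generic c1 c2 c3" and "x \<le> N" "y \<le> N" "x \<noteq> y"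
  shows "(\<Sum>n\<le>N. Omega n c1 c2 c3 N * F43 n x c1 c2 c3 N * F43 n y c1 c2 c3 N) = 0"
proof -
  have dual: "racah_generic c3 c2 c1"
    using assms(1) by (simp add: racah_generic_def ac_simps)
  have "(\<Sum>n\<le>N. Omega n c1 c2 c3 N * F43 n x c1 c2 c3 N * F43 n y c1 c2 c3 N)
      = pochhammer (c1 + 1) N
        * (\<Sum>n\<le>N. racah_weight n c3 c2 c1 N * F43 x n c3 c2 c1 N * F43 y n c3 c2 c1 N)"
    using assms(1) unfolding sum_distrib_left
    by (intro sum.cong)
      (simp_all add: Omega_eq_racah_weight racah_generic_def F43_swap[of _ x] F43_swap[of _ y] ac_simps)
  also have "\<dots> = 0"
    using F43_orthogonal[OF dual assms(2-4)] by simp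
  finally show ?thesis .
qed

lemma Omega_0_racah_weight_sum:
  assumes "racah_generic c1 c2 c3"
  shows "pochhammer (c3 + 1) N * Omega 0 c1 c2 c3 N * (\<Sum>x\<le>N. racah_weight x c1 c2 c3 N) = 1"
proof -
  from assms have c: "c1 \<notin> \<int>" "c3 \<notin> \<int>" "c2 + c3 \<notin> \<int>"
    by (simp_all add: racah_generic_def)
  have "pochhammer (c2 + c3 + 2) N \<noteq> 0" "pochhammer (c1 + 1) N \<noteq> 0" "pochhammer (c3 + 1) N \<noteq> 0"
    by (rule pochhammer_nonzero_if_int_shift_of_non_int, rule c, simp add: algebra_simps)+
  moreover have "Omega 0 c1 c2 c3 N = pochhammer (c1 + 1) N / pochhammer (c2 + c3 + 2) N"
  proof -
    have "c2 + c3 + 1 \<noteq> 0"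
      by (rule nonzero_if_int_shift_of_non_int[OF c(3)]) simp
    moreover have "pochhammer (c2 + c3 + 1) (Suc N) = (c2 + c3 + 1) * pochhammer (c2 + c3 + 2) N"
      by (simp add: pochhammer_rec algebra_simps)
    ultimately show ?thesis
      unfolding Omega_def by simp
  qed
  ultimately show ?thesis
    unfolding racah_weight_sum[OF assms] by (simp add: field_simps)
qed

lemma racah_norms:
  assumes "racah_generic c1 c2 c3"
  shows "n \<le> N \<Longrightarrow> pochhammer (c3 + 1) N * Omega n c1 c2 c3 N
      * (\<Sum>x\<le>N. racah_weight x c1 c2 c3 N * F43 n x c1 c2 c3 N * F43 n x c1 c2 c3 N) = 1"
    and "x \<le> N \<Longrightarrow> pochhammer (c3 + 1) N * racah_weight x c1 c2 c3 N
      * (\<Sum>n\<le>N. Omega n c1 c2 c3 N * F43 n x c1 c2 c3 N * F43 n x c1 c2 c3 N) = 1"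
proof -
  note norms = biorthogonal_norms[where F = "\<lambda>n x. F43 n x c1 c2 c3 N"
      and W = "\<lambda>x. racah_weight x c1 c2 c3 N" and V = "\<lambda>n. Omega n c1 c2 c3 N",
      OF F43_0_left F43_0_right F43_orthogonal[OF assms] F43_dual_orthogonal[OF assms]]
  show "n \<le> N \<Longrightarrow> pochhammer (c3 + 1) N * Omega n c1 c2 c3 N
      * (\<Sum>x\<le>N. racah_weight x c1 c2 c3 N * F43 n x c1 c2 c3 N * F43 n x c1 c2 c3 N) = 1"
    using norms(1) Omega_0_racah_weight_sum[OF assms] by (simp add: mult.assoc)
  show "x \<le> N \<Longrightarrow> pochhammer (c3 + 1) N * racah_weight x c1 c2 c3 N
      * (\<Sum>n\<le>N. Omega n c1 c2 c3 N * F43 n x c1 c2 c3 N * F43 n x c1 c2 c3 N) = 1"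
    using norms(2) Omega_0_racah_weight_sum[OF assms] by (simp add: mult.assoc)
qed

section \<open>Tratnik polynomials\<close>

text \<open>The constraint on c0 + c1 + c2 + c3 + c4 enters only through these two reflections.\<close>

lemma pochhammer_reflections_of_sum_constraint:
  fixes c0 c1 c2 c3 c4 :: "'a :: comm_ring_1"
  assumes "c0 + c1 + c2 + c3 + c4 = - 2 * of_nat N - 3" and "x + j \<le> N"
  shows "pochhammer (of_nat (N - x) + 2 + c3 + c0 + c4) j
      = (-1) ^ j * pochhammer (of_nat x + c1 + c2 + 1 + of_nat (N - j + 1)) j"
    and "pochhammer (c0 + c4 + of_nat j + 1 + of_nat (N - x + 1)) x
      = (-1) ^ x * pochhammer (of_nat (N - j) + 2 + c1 + c2 + c3) x"
proof -
  have c0: "c0 = - 2 * of_nat N - 3 - c1 - c2 - c3 - c4"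
    using assms(1) by (simp add: algebra_simps)
  show "pochhammer (of_nat (N - x) + 2 + c3 + c0 + c4) j
      = (-1) ^ j * pochhammer (of_nat x + c1 + c2 + 1 + of_nat (N - j + 1)) j"
    using pochhammer_minus[of "of_nat N + of_nat x + 1 + c1 + c2" j] assms(2)
    unfolding c0 by (simp add: of_nat_diff algebra_simps)
  show "pochhammer (c0 + c4 + of_nat j + 1 + of_nat (N - x + 1)) x
      = (-1) ^ x * pochhammer (of_nat (N - j) + 2 + c1 + c2 + c3) x"
    using pochhammer_minus[of "of_nat (N - j) + of_nat x + 1 + c1 + c2 + c3" x] assms(2)
    unfolding c0 by (simp add: of_nat_diff algebra_simps)
qed

lemma Lambda_Omega_factorization:
  assumes sum: "c0 + c1 + c2 + c3 + c4 = - 2 * of_nat N - 3"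
    and "racah_generic c1 c2 c3" "racah_generic c4 c0 c3" and "x + j \<le> N"
  shows "Lambda x c1 c2 N * Omega j c3 c0 c4 (N - x)
    = Lambda j c4 c0 N * pochhammer (c3 + 1) (N - j) * racah_weight x c1 c2 c3 (N - j)"
proof -
  from assms(2,3) have c: "c1 \<notin> \<int>" "c3 \<notin> \<int>" "c4 \<notin> \<int>" "c1 + c2 \<notin> \<int>"
      "c1 + c2 + c3 \<notin> \<int>" "c0 + c4 \<notin> \<int>"
    by (simp_all add: racah_generic_def ac_simps)
  note reflect = pochhammer_reflections_of_sum_constraint[OF sum assms(4)]
  define Cx Cj Cxj Cjx where
    "Cx = (of_nat (N choose x) :: complex)" and "Cj = (of_nat (N choose j) :: complex)"
    and "Cxj = (of_nat ((N - x) choose j) :: complex)" and "Cjx = (of_nat ((N - j) choose x) :: complex)"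
  define ex ej where "ex = 2 * of_nat x + c1 + c2 + 1" and "ej = 2 * of_nat j + c0 + c4 + 1"
  define P0 P1 P2 P4 where "P0 = pochhammer (c0 + 1) j" and "P1 = pochhammer (c1 + 1) x"
    and "P2 = pochhammer (c2 + 1) x" and "P4 = pochhammer (c4 + 1) j"
  define Q G A B H U where "Q = pochhammer (of_nat x + c1 + c2 + 1) (N - j + 1)"
    and "G = pochhammer (of_nat x + c1 + c2 + 1 + of_nat (N - j + 1)) j"
    and "A = pochhammer (c3 + 1) (N - x - j)" and "B = pochhammer (c3 + 1 + of_nat (N - x - j)) x"
    and "H = pochhammer (c0 + c4 + of_nat j + 1) (N - x + 1)"
    and "U = pochhammer (of_nat (N - j) + 2 + c1 + c2 + c3) x"
  have nz: "G \<noteq> 0" "P1 \<noteq> 0" "Q \<noteq> 0" "P4 \<noteq> 0" "H \<noteq> 0" "U \<noteq> 0" "B \<noteq> 0"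
    unfolding G_def P1_def Q_def P4_def H_def U_def B_def
    by (rule pochhammer_nonzero_if_int_shift_of_non_int, rule c, simp add: algebra_simps)+
  have Q_G: "pochhammer (of_nat x + c1 + c2 + 1) (N + 1) = Q * G"
    using pochhammer_product'[of "of_nat x + c1 + c2 + 1" "N - j + 1" j] assms(4)
    unfolding Q_def G_def by (simp add: algebra_simps)
  have A_B: "pochhammer (c3 + 1) (N - j) = A * B"
    using pochhammer_product'[of "c3 + 1" "N - x - j" x] assms(4)
    unfolding A_def B_def by (simp add: algebra_simps)
  have B: "pochhammer (- c3 - of_nat (N - j)) x = (-1) ^ x * B"
    using pochhammer_minus[of "c3 + of_nat (N - j)" x] assms(4)
    unfolding B_def by (simp add: of_nat_diff algebra_simps)
  have H_U: "pochhammer (of_nat j + c4 + c0 + 1) (N + 1) = H * ((-1) ^ x * U)"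
    using pochhammer_product'[of "c0 + c4 + of_nat j + 1" "N - x + 1" x] reflect(2) assms(4)
    unfolding H_def U_def by (simp add: ac_simps)
  have ej: "2 * of_nat j + c4 + c0 + 1 = ej"
    unfolding ej_def by (simp add: ac_simps)
  define M where "M = (-1) ^ x * (-1) ^ j * ex * ej * P2 * P0 * A / (P1 * Q * P4 * H)"
  have "Lambda x c1 c2 N * Omega j c3 c0 c4 (N - x)
      = (-1) ^ x * Cx * ex * P2 / (P1 * (Q * G)) * (Cxj * ej * P0 * ((-1) ^ j * G) * A / (P4 * H))"
    unfolding Lambda_def Omega_def Q_G reflect(1) G_def[symmetric]
    unfolding Cx_def Cxj_def ex_def ej_def P0_def P1_def P2_def P4_def A_def H_def ..
  also have "\<dots> = (Cx * Cxj) * M"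
    unfolding M_def using nz by (simp add: field_simps)
  also have "Cx * Cxj = Cj * Cjx"
    unfolding Cx_def Cxj_def Cj_def Cjx_def using choose_mult_swap[OF assms(4)] by (metis of_nat_mult)
  also have "(Cj * Cjx) * M = (-1) ^ j * Cj * ej * P0 / (P4 * (H * ((-1) ^ x * U))) * (A * B)
      * ((-1) ^ x * Cjx * ex * P2 / (P1 * Q) * U / ((-1) ^ x * B))"
    unfolding M_def using nz by (simp add: field_simps)
  also have "\<dots> = Lambda j c4 c0 N * pochhammer (c3 + 1) (N - j) * racah_weight x c1 c2 c3 (N - j)"
    unfolding Lambda_def racah_weight_def A_B B H_U ej
    unfolding Cj_def Cjx_def ex_def ej_def P0_def P1_def P2_def P4_def A_def H_def Q_def U_def ..
  finally show ?thesis .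
qed

lemma racah_p_orthonormal:
  assumes "racah_generic c1 c2 c3" and "i \<le> M" "k \<le> M"
  shows "pochhammer (c3 + 1) M
      * (\<Sum>x\<le>M. racah_weight x c1 c2 c3 M * racah_p i x c1 c2 c3 M * racah_p k x c1 c2 c3 M)
    = (if i = k then Omega i c1 c2 c3 M else 0)"
proof -
  have "pochhammer (c3 + 1) M
      * (\<Sum>x\<le>M. racah_weight x c1 c2 c3 M * racah_p i x c1 c2 c3 M * racah_p k x c1 c2 c3 M)
    = Omega i c1 c2 c3 M * Omega k c1 c2 c3 M * pochhammer (c3 + 1) M
      * (\<Sum>x\<le>M. racah_weight x c1 c2 c3 M * F43 i x c1 c2 c3 M * F43 k x c1 c2 c3 M)"
    unfolding racah_p_def sum_distrib_left by (intro sum.cong) (simp_all add: ac_simps)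
  then show ?thesis
    using F43_orthogonal[OF assms] racah_norms(1)[OF assms(1,2)] by (auto simp: algebra_simps)
qed

lemma racah_p_dual_orthonormal:
  assumes "racah_generic c1 c2 c3"
  shows "(\<Sum>y\<le>M. Omega y c1 c2 c3 M * racah_p j y c3 c2 c1 M * racah_p l y c3 c2 c1 M)
    = (if j = l \<and> j \<le> M then Omega j c3 c2 c1 M else 0)"
proof (cases "j \<le> M \<and> l \<le> M")
  case False
  then have "Omega j c3 c2 c1 M = 0 \<or> Omega l c3 c2 c1 M = 0"
    by (auto simp: Omega_def)
  then show ?thesis
    using False by (auto simp: racah_p_def)
next
  case True
  have "(\<Sum>y\<le>M. Omega y c1 c2 c3 M * racah_p j y c3 c2 c1 M * racah_p l y c3 c2 c1 M)
      = Omega j c3 c2 c1 M * Omega l c3 c2 c1 M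
        * (\<Sum>y\<le>M. Omega y c1 c2 c3 M * F43 y j c1 c2 c3 M * F43 y l c1 c2 c3 M)"
    unfolding racah_p_def sum_distrib_left
    by (intro sum.cong) (simp_all add: F43_swap[of j] F43_swap[of l] ac_simps)
  moreover have "Omega l c3 c2 c1 M = pochhammer (c3 + 1) M * racah_weight l c1 c2 c3 M"
    using assms True by (simp add: Omega_eq_racah_weight racah_generic_def)
  ultimately show ?thesis
    using True F43_dual_orthogonal[OF assms, of j M l] racah_norms(2)[OF assms, of l M]
    by (auto simp: algebra_simps)
qed

theorem mainTheorem1:
  fixes N i j k l :: nat and c0 c1 c2 c3 c4 :: complex
  assumes sum: "c0 + c1 + c2 + c3 + c4 = - 2 * of_nat N - 3"
    and generic: "\<forall>c \<in> {c0, c1, c2, c3, c4, c1 + c2, c2 + c3, c0 + c3, c0 + c4,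
                         c1 + c2 + c3, c0 + c3 + c4}. c \<notin> \<int>"
    and ij: "i + j \<le> N" and kl: "k + l \<le> N"
  shows "(\<Sum>x\<le>N. \<Sum>y\<le>N - x.
            Lambda x c1 c2 N * Omega y c4 c0 c3 (N - x)
            * tratnik i j x y c0 c1 c2 c3 c4 N * tratnik k l x y c0 c1 c2 c3 c4 N)
         = (if i = k \<and> j = l then Lambda j c4 c0 N * Omega i c1 c2 c3 (N - j) else 0)"
proof -
  have g1: "racah_generic c1 c2 c3" and g2: "racah_generic c4 c0 c3"
    using generic by (simp_all add: racah_generic_def ac_simps)
  have "(\<Sum>x\<le>N. \<Sum>y\<le>N - x. Lambda x c1 c2 N * Omega y c4 c0 c3 (N - x)
            * tratnik i j x y c0 c1 c2 c3 c4 N * tratnik k l x y c0 c1 c2 c3 c4 N)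
      = (\<Sum>x\<le>N. Lambda x c1 c2 N * racah_p i x c1 c2 c3 (N - j) * racah_p k x c1 c2 c3 (N - l)
          * (if j = l \<and> j \<le> N - x then Omega j c3 c0 c4 (N - x) else 0))"
    unfolding tratnik_def racah_p_dual_orthonormal[OF g2, symmetric] sum_distrib_left
    by (intro sum.cong) (simp_all add: ac_simps)
  also have "\<dots> = (if j = l then (\<Sum>x\<le>N - j. Lambda x c1 c2 N * Omega j c3 c0 c4 (N - x)
          * racah_p i x c1 c2 c3 (N - j) * racah_p k x c1 c2 c3 (N - j)) else 0)"
    using ij by (auto intro!: sum.mono_neutral_cong_right split: if_splits)
  also have "\<dots> = (if j = l then Lambda j c4 c0 N * (pochhammer (c3 + 1) (N - j)
          * (\<Sum>x\<le>N - j. racah_weight x c1 c2 c3 (N - j)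
              * racah_p i x c1 c2 c3 (N - j) * racah_p k x c1 c2 c3 (N - j))) else 0)"
    using Lambda_Omega_factorization[OF sum g1 g2] ij
    by (auto simp: sum_distrib_left ac_simps intro!: sum.cong)
  also have "\<dots> = (if i = k \<and> j = l then Lambda j c4 c0 N * Omega i c1 c2 c3 (N - j) else 0)"
  proof (cases "j = l")
    case True
    then have "i \<le> N - j" "k \<le> N - j"
      using ij kl by auto
    with True show ?thesis
      by (simp add: racah_p_orthonormal[OF g1])
  qed simp
  finally show ?thesis .
qed

end
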